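(* Consider the algorithm AOD described in the context, with known horizon $T$, under assumption (A3). For any interval $J=[i,j]\in\mathcal{D}$ and every $t\in J$ with $t\le T$, \[ \sum_{u=i}^t f_u(\mathbf{w}_u)-\sum_{u=i}^t f_u(\mathbf{w}_{u,J})\le\sqrt{3(t-i+1)c(t)}, \] where $c(t)=1+\ln t+\ln(1+\log_2 T)+\ln\frac{5+3\ln(1+t)}{2}$.
   Context: Online convex optimization: $\Omega\subseteq\mathbb{R}^d$ convex; in round $t=1,\ldots,T$ the learner plays $\mathbf{w}_t\in\Omega$ and then a convex $f_t:\Omega\to\mathbb{R}$ is revealed. Assumption (A3): $0\le f_t(\mathbf{w})\le1$ for all $\mathbf{w}\in\Omega$, $t\in[T]$. (Gradients $\nabla f_t$ are assumed to exist; $D,G>0$ are constants; $\Pi_\Omega$ is Euclidean projection.) Dense geometric covering intervals: $\mathcal{D}=\bigcup_{k\ge0,\,2^k\le T}\mathcal{D}_k$, $\mathcal{D}_k=\{[(i-1)2^k+1,\,i2^k]: i=1,2,\ldots\}$. Algorithm AOD: for each $I\in\mathcal{D}$ an expert $E_I$ runs online gradient descent $\mathbf{w}_{t+1,I}=\Pi_\Omega[\mathbf{w}_{t,I}-\eta_I\nabla f_t(\mathbf{w}_{t,I})]$, $\eta_I=D/(G\sqrt{|I|})$, over rounds $t\in I$; its initial point is arbitrary if $\min I=1$, and otherwise is the next iterate of the expert of the preceding same-length interval $[\min I-|I|,\min I-1]$ after processing $f_{\min I-1}$. Active experts at round $t$: $\mathcal{A}_t=\{E_I:I\in\mathcal{D},t\in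 I\}$. Meta-algorithm (AdaNormalHedge): $\Phi(R,C)=\exp([R]_+^2/(3C))$, $[x]_+=\max(0,x)$, $\Phi(0,0)=1$, $w(R,C)=\tfrac12(\Phi(R+1,C+1)-\Phi(R-1,C+1))$, $R_{t-1,I}=\sum_{u=\min I}^{t-1}(f_u(\mathbf{w}_u)-f_u(\mathbf{w}_{u,I}))$, $C_{t-1,I}=\sum_{u=\min I}^{t-1}|f_u(\mathbf{w}_u)-f_u(\mathbf{w}_{u,I})|$, $p_{t,I}=w(R_{t-1,I},C_{t-1,I})/\sum_{E_{I'}\in\mathcal{A}_t}w(R_{t-1,I'},C_{t-1,I'})$, played point $\mathbf{w}_t=\sum_{E_I\in\mathcal{A}_t}p_{t,I}\mathbf{w}_{t,I}$. *)

theory Defs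
  imports "HOL-Analysis.Analysis"
begin

text \<open>Dense geometric covering intervals D restricted to lengths 2^k <= T.
  Intervals are represented literally as sets of rounds.\<close>
definition dense_intervals :: "nat \<Rightarrow> nat set set" where
  "dense_intervals T = {{(i - 1) * 2 ^ k + 1 .. i * 2 ^ k} | k i. 2 ^ k \<le> T \<and> 1 \<le> i}"

definition active :: "nat \<Rightarrow> nat \<Rightarrow> nat set set" where
  "active T t = {I \<in> dense_intervals T. t \<in> I}"

definition proj :: "'a::euclidean_space set \<Rightarrow> 'a \<Rightarrow> 'a" where
  "proj \<Omega> x = (SOME y. y \<in> \<Omega> \<and> (\<forall>z\<in>\<Omega>. dist x y \<le> dist x z))"

text \<open>AdaNormalHedge potential; with Isabelle's x/0 = 0 we get Phi 0 0 = 1.\<close>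
definition Phi :: "real \<Rightarrow> real \<Rightarrow> real" where
  "Phi R C = exp ((max 0 R)\<^sup>2 / (3 * C))"

definition anh_w :: "real \<Rightarrow> real \<Rightarrow> real" where
  "anh_w R C = (Phi (R + 1) (C + 1) - Phi (R - 1) (C + 1)) / 2"

text \<open>R_{t-1,I} and C_{t-1,I}: sums over u from min I to t-1.\<close>
definition regR :: "(nat \<Rightarrow> 'a \<Rightarrow> real) \<Rightarrow> (nat \<Rightarrow> 'a) \<Rightarrow> (nat set \<Rightarrow> nat \<Rightarrow> 'a) \<Rightarrow> nat set \<Rightarrow> nat \<Rightarrow> real" where
  "regR f w wexp I t = (\<Sum>u\<in>{Min I..<t}. f u (w u) - f u (wexp I u))"

definition regC :: "(nat \<Rightarrow> 'a \<Rightarrow> real) \<Rightarrow> (nat \<Rightarrow> 'a) \<Rightarrow> (nat set \<Rightarrow> nat \<Rightarrow> 'a) \<Rightarrow> nat set \<Rightarrow> nat \<Rightarrow> real" where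
  "regC f w wexp I t = (\<Sum>u\<in>{Min I..<t}. \<bar>f u (w u) - f u (wexp I u)\<bar>)"

definition meta_p :: "nat \<Rightarrow> (nat \<Rightarrow> 'a \<Rightarrow> real) \<Rightarrow> (nat \<Rightarrow> 'a) \<Rightarrow> (nat set \<Rightarrow> nat \<Rightarrow> 'a) \<Rightarrow> nat \<Rightarrow> nat set \<Rightarrow> real" where
  "meta_p T f w wexp t I =
     anh_w (regR f w wexp I t) (regC f w wexp I t) /
     (\<Sum>I'\<in>active T t. anh_w (regR f w wexp I' t) (regC f w wexp I' t))"

definition eta :: "real \<Rightarrow> real \<Rightarrow> nat set \<Rightarrow> real" where
  "eta D G I = D / (G * sqrt (real (card I)))"

end

theory Submission
  imports Defs "HOL-Probability.Hoeffding"
begin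

(* For an expert with cumulative regret R and cumulative
   absolute regret C, one round with instantaneous regret r, |r| <= 1, raises the potential
   Phi R C = exp ([R]_+^2 / (3 C)) by at most anh_w R C * r + 4 |r| / (C + 1). The played point is
   the anh_w-weighted average of the awake experts, so by convexity (Jensen) the first terms sum to
   something nonpositive over the experts, while the second terms telescope to at most
   4 (1 + ln (1 + t)) per expert. Hence the total potential of the at most t (1 + log2 T)
   intervals started by round t is at most their number times 5 + 4 ln (1 + t); taking the
   logarithm of the potential of J gives R^2 / (3 C) <= c(t) with C <= t - i + 1.
   The gradient steps of the experts matter only in that their iterates stay in Omega. *)

lemma cosh_le_exp_half_square: "cosh (y::real) \<le> exp (y\<^sup>2 / 2)"
proof -
  have "- (2 * \<bar>y\<bar>) / 2 + ln (1 + (exp (2 * \<bar>y\<bar>) - 1) / 2) \<le> y\<^sup>2 / 2"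
    using Hoeffdings_lemma_aux[of "2 * \<bar>y\<bar>" "1/2"] by (simp add: power2_eq_square)
  then have "ln ((1 + exp (2 * \<bar>y\<bar>)) / 2) \<le> \<bar>y\<bar> + y\<^sup>2 / 2"
    by (simp add: field_simps)
  then have "(1 + exp (2 * \<bar>y\<bar>)) / 2 \<le> exp \<bar>y\<bar> * exp (y\<^sup>2 / 2)"
    by (metis exp_add exp_le_cancel_iff exp_ln add_pos_pos divide_pos_pos exp_gt_zero
        zero_less_one zero_less_numeral)
  then have "(exp (- \<bar>y\<bar>) + exp \<bar>y\<bar>) / 2 \<le> exp (y\<^sup>2 / 2)"
    by (simp add: field_simps exp_minus flip: exp_add)
  then have "cosh \<bar>y\<bar> \<le> exp (y\<^sup>2 / 2)"
    by (simp add: cosh_field_def add.commute)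
  then show ?thesis
    by simp
qed

lemma exp_le_exp_add_diff_mult: "x \<le> y \<Longrightarrow> exp y \<le> exp x + (y - x) * exp (y::real)"
  using exp_ge_add_one_self[of "x - y"] mult_right_mono[of "1 + (x - y)" "exp (x - y)" "exp y"]
  by (simp add: algebra_simps flip: exp_add)

lemma Phi_ge_one: "0 \<le> C \<Longrightarrow> 1 \<le> Phi R C"
  by (simp add: Phi_def)

lemma Phi_mono: "R \<le> R' \<Longrightarrow> 0 \<le> C \<Longrightarrow> Phi R C \<le> Phi R' C"
  unfolding Phi_def by (auto intro!: divide_right_mono power_mono)

lemma anh_w_nonneg: "0 \<le> C \<Longrightarrow> 0 \<le> anh_w R C"
  using Phi_mono[of "R - 1" "R + 1" "C + 1"] by (simp add: anh_w_def)

lemma anh_w_zero_pos: "0 < anh_w 0 0"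
  by (simp add: anh_w_def Phi_def)

lemma Phi_shift_average_le_nonneg:
  assumes R: "0 \<le> R" "R \<le> C"
  shows "(Phi (R + 1) (C + 1) + Phi (R - 1) (C + 1)) / 2 \<le> Phi R C + 4 / (C + 1)"
proof -
  define a where "a = 1 / (3 * (C + 1))"
  define v where "v = a * R\<^sup>2"
  have a: "0 < a" "a \<le> 1/3" and four: "4 / (C + 1) = 12 * a"
    using R by (auto simp: a_def field_simps)
  have v: "0 \<le> v"
    using a by (simp add: v_def)
  have "Phi (R + 1) (C + 1) = exp ((R + 1)\<^sup>2 * a)"
    using R by (simp add: Phi_def a_def)
  moreover have "Phi (R - 1) (C + 1) \<le> exp ((R - 1)\<^sup>2 * a)"
    using a R unfolding Phi_def a_def
    by (auto intro!: divide_right_mono power_mono simp: max_def power2_commute[of R])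
  ultimately have "(Phi (R + 1) (C + 1) + Phi (R - 1) (C + 1)) / 2
      \<le> (exp ((R + 1)\<^sup>2 * a) + exp ((R - 1)\<^sup>2 * a)) / 2"
    by simp
  also have "\<dots> = exp (v + a) * cosh (2 * a * R)"
    by (simp add: cosh_field_def v_def power2_eq_square algebra_simps flip: exp_add)
  also have "\<dots> \<le> exp (v + a) * exp (2 * a * v)"
    using cosh_le_exp_half_square[of "2 * a * R"]
    by (simp add: v_def power2_eq_square mult_ac)
  finally have upper: "(Phi (R + 1) (C + 1) + Phi (R - 1) (C + 1)) / 2 \<le> exp (v + a + 2 * a * v)"
    by (simp add: exp_add)
  \<comment> \<open>The exponents of \<open>upper\<close> and \<open>lower\<close> differ by \<open>a * (1 - v)\<close>; for \<open>v < 1\<close>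
    this costs at most \<open>a * exp 2 \<le> 12 * a\<close>.\<close>
  have lower: "exp (v + 3 * a * v) \<le> Phi R C"
  proof (cases "C = 0")
    case True
    then show ?thesis using R by (simp add: v_def Phi_def)
  next
    case False
    then have "0 < C"
      using R by simp
    then have "a + 3 * a\<^sup>2 \<le> 1 / (3 * C)"
      by (simp add: a_def divide_simps power2_eq_square) (simp add: algebra_simps)
    then have "(a + 3 * a\<^sup>2) * R\<^sup>2 \<le> R\<^sup>2 / (3 * C)"
      using mult_right_mono[of _ _ "R\<^sup>2"] by fastforce
    then show ?thesis
      using R by (simp add: Phi_def v_def power2_eq_square algebra_simps)
  qed
  have "exp (v + a + 2 * a * v) \<le> exp (v + 3 * a * v) + 12 * a"
  proof (cases "v + 3 * a * v \<le> v + a + 2 * a * v")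
    case True
    then have "v \<le> 1"
      using a by (simp add: algebra_simps)
    then have "v + a + 2 * a * v \<le> 1 + 1"
      using a v mult_mono[of a "1/3" v 1] by linarith
    then have "exp (v + a + 2 * a * v) \<le> exp 1 * exp 1"
      by (simp flip: exp_add)
    also have "\<dots> \<le> 12"
      using exp_le mult_mono[of "exp 1" 3 "exp 1" "3::real"] by simp
    finally have "exp (v + a + 2 * a * v) \<le> 12" .
    moreover have "v + a + 2 * a * v - (v + 3 * a * v) \<le> a"
      using a v by (simp add: algebra_simps)
    ultimately have "(v + a + 2 * a * v - (v + 3 * a * v)) * exp (v + a + 2 * a * v) \<le> a * 12"
      using True by (intro mult_mono) auto
    with exp_le_exp_add_diff_mult[OF True] show ?thesis
      by linarith
  next
    case False
    then have "exp (v + a + 2 * a * v) \<le> exp (v + 3 * a * v)"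
      by simp
    then show ?thesis
      using a by linarith
  qed
  with upper lower four show ?thesis
    by linarith
qed

lemma Phi_shift_average_le:
  assumes "0 \<le> C" "\<bar>R\<bar> \<le> C"
  shows "(Phi (R + 1) (C + 1) + Phi (R - 1) (C + 1)) / 2 \<le> Phi R C + 4 / (C + 1)"
proof -
  have "Phi (R + 1) (C + 1) + Phi (R - 1) (C + 1)
      \<le> Phi (max 0 R + 1) (C + 1) + Phi (max 0 R - 1) (C + 1)"
    using assms by (intro add_mono Phi_mono) auto
  moreover have "Phi (max 0 R) C = Phi R C"
    by (simp add: Phi_def)
  ultimately show ?thesis
    using Phi_shift_average_le_nonneg[of "max 0 R" C] assms by force
qed

lemma convex_combination_square_div_le:
  fixes s x0 x1 y0 y1 :: real
  assumes s: "0 \<le> s" "s \<le> 1" and y: "0 < y0" "0 < y1"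
  shows "((1 - s) * x0 + s * x1)\<^sup>2 / ((1 - s) * y0 + s * y1)
    \<le> (1 - s) * x0\<^sup>2 / y0 + s * x1\<^sup>2 / y1"
proof -
  have y_pos: "0 < (1 - s) * y0 + s * y1"
    using s y by (cases "s = 0") (auto intro: add_nonneg_pos add_pos_nonneg)
  have "((1 - s) * x0\<^sup>2 * y1 + s * x1\<^sup>2 * y0) * ((1 - s) * y0 + s * y1)
      - ((1 - s) * x0 + s * x1)\<^sup>2 * (y0 * y1) = s * (1 - s) * (x0 * y1 - x1 * y0)\<^sup>2"
    by (simp add: power2_eq_square algebra_simps)
  moreover have "0 \<le> s * (1 - s) * (x0 * y1 - x1 * y0)\<^sup>2"
    using s by simp
  ultimately show ?thesis
    using y y_pos by (simp add: field_simps)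
qed

lemma Phi_segment_le:
  assumes C: "0 \<le> C" "\<bar>R\<bar> \<le> C" and s: "0 \<le> s" "s \<le> 1"
  shows "Phi (R + \<sigma> * s) (C + s) \<le> (1 - s) * Phi R C + s * Phi (R + \<sigma>) (C + 1)"
proof -
  define h where "h s = (max 0 (R + \<sigma> * s))\<^sup>2 / (3 * (C + s))" for s
  have h_convex: "h s \<le> (1 - s) * h 0 + s * h 1"
  proof (cases "C = 0")
    case True
    then have "R = 0"
      using C by simp
    moreover have "max 0 (\<sigma> * s) = s * max 0 \<sigma>"
      using s by (auto simp: max_def mult_le_0_iff zero_le_mult_iff)
    ultimately show ?thesis
      using True s by (cases "s = 0") (simp_all add: h_def power2_eq_square)
  next
    case False
    define x0 x1 where "x0 = max 0 R" and "x1 = max 0 (R + \<sigma>)"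
    have "R + \<sigma> * s = (1 - s) * R + s * (R + \<sigma>)"
      by (simp add: algebra_simps)
    moreover have "(1 - s) * R \<le> (1 - s) * x0" "s * (R + \<sigma>) \<le> s * x1"
      "0 \<le> (1 - s) * x0 + s * x1"
      using s by (auto simp: x0_def x1_def intro!: mult_left_mono)
    ultimately have "max 0 (R + \<sigma> * s) \<le> (1 - s) * x0 + s * x1"
      by simp
    moreover have "(1 - s) * (3 * C) + s * (3 * (C + 1)) = 3 * (C + s)"
      by (simp add: algebra_simps)
    ultimately have "h s \<le> ((1 - s) * x0 + s * x1)\<^sup>2 / ((1 - s) * (3 * C) + s * (3 * (C + 1)))"
      using C s unfolding h_def by (auto intro!: divide_right_mono power_mono)
    also have "\<dots> \<le> (1 - s) * x0\<^sup>2 / (3 * C) + s * x1\<^sup>2 / (3 * (C + 1))"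
      using C False s by (intro convex_combination_square_div_le) auto
    finally show ?thesis
      by (simp add: h_def x0_def x1_def)
  qed
  have "exp (h s) \<le> exp ((1 - s) * h 0 + s * h 1)"
    using h_convex by simp
  also have "\<dots> \<le> (1 - s) * exp (h 0) + s * exp (h 1)"
    using convex_onD[OF exp_convex, of s "h 0" "h 1"] s by simp
  finally show ?thesis
    by (simp add: Phi_def h_def)
qed

lemma Phi_unit_step_le:
  assumes "0 \<le> C" "\<bar>R\<bar> \<le> C" "\<sigma> = 1 \<or> \<sigma> = -1"
  shows "Phi (R + \<sigma>) (C + 1) - Phi R C \<le> \<sigma> * anh_w R C + 4 / (C + 1)"
  using Phi_shift_average_le[OF assms(1,2)] assms(3) by (auto simp: anh_w_def field_simps)

lemma Phi_step_le:
  assumes "0 \<le> C" "\<bar>R\<bar> \<le> C" "\<bar>r\<bar> \<le> 1"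
  shows "Phi (R + r) (C + \<bar>r\<bar>) \<le> Phi R C + anh_w R C * r + 4 * \<bar>r\<bar> / (C + 1)"
proof -
  define \<sigma> :: real where "\<sigma> = (if 0 \<le> r then 1 else -1)"
  have r: "r = \<sigma> * \<bar>r\<bar>"
    by (simp add: \<sigma>_def)
  have "Phi (R + r) (C + \<bar>r\<bar>) \<le> (1 - \<bar>r\<bar>) * Phi R C + \<bar>r\<bar> * Phi (R + \<sigma>) (C + 1)"
    using Phi_segment_le[OF assms(1,2), of "\<bar>r\<bar>" \<sigma>] assms(3) r by simp
  also have "\<dots> = Phi R C + \<bar>r\<bar> * (Phi (R + \<sigma>) (C + 1) - Phi R C)"
    by (simp add: algebra_simps)
  also have "\<dots> \<le> Phi R C + \<bar>r\<bar> * (\<sigma> * anh_w R C + 4 / (C + 1))"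
    using Phi_unit_step_le[OF assms(1,2), of \<sigma>]
    by (intro add_left_mono mult_left_mono) (auto simp: \<sigma>_def)
  also have "\<dots> = Phi R C + anh_w R C * r + 4 * \<bar>r\<bar> / (C + 1)"
    by (cases "0 \<le> r") (simp_all add: \<sigma>_def algebra_simps)
  finally show ?thesis .
qed

lemma ln_sub_inverse_increment_ge:
  fixes x C :: real
  assumes x: "0 \<le> x" "x \<le> 1" and C: "0 \<le> C"
  shows "x / (1 + C) \<le> (ln (1 + (C + x)) - 1 / (1 + (C + x))) - (ln (1 + C) - 1 / (1 + C))"
proof -
  have "x / (1 + (C + x)) \<le> ln (1 + (C + x)) - ln (1 + C)"
    using ln_diff_le[of "1 + C" "1 + (C + x)"] x C by (simp add: diff_divide_distrib)
  moreover have "x / (1 + C) \<le> x / (1 + (C + x)) + (1 / (1 + C) - 1 / (1 + (C + x)))"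
  proof -
    have "x * (1 + (C + x)) \<le> x * (1 + C) + x"
      using x mult_left_le[of x x] by (simp add: algebra_simps)
    then show ?thesis
      using x C by (simp add: divide_simps)
  qed
  ultimately show ?thesis
    by linarith
qed

lemma sum_div_one_plus_partial_sum_le:
  fixes x :: "nat \<Rightarrow> real"
  assumes "\<forall>u<n. 0 \<le> x u \<and> x u \<le> 1"
  shows "(\<Sum>u<n. x u / (1 + (\<Sum>v<u. x v))) \<le> 1 + ln (1 + (\<Sum>u<n. x u))"
proof -
  define G where "G c = ln (1 + c) - 1 / (1 + c)" for c :: real
  have "(\<Sum>u<n. x u / (1 + (\<Sum>v<u. x v))) \<le> G (\<Sum>u<n. x u) + 1"
    using assms
  proof (induction n)
    case (Suc n)
    have "0 \<le> (\<Sum>v<n. x v)"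
      using Suc.prems by (auto intro: sum_nonneg)
    then have "x n / (1 + (\<Sum>v<n. x v)) \<le> G (\<Sum>u<Suc n. x u) - G (\<Sum>u<n. x u)"
      using ln_sub_inverse_increment_ge[of "x n" "\<Sum>v<n. x v"] Suc.prems
      by (simp add: G_def)
    with Suc show ?case
      by simp
  qed (simp add: G_def)
  moreover have "0 \<le> (\<Sum>u<n. x u)"
    using assms by (auto intro: sum_nonneg)
  then have "G (\<Sum>u<n. x u) \<le> ln (1 + (\<Sum>u<n. x u))"
    by (simp add: G_def)
  ultimately show ?thesis
    by linarith
qed

text \<open>Sleeping experts are modelled by zero regret: expert \<open>i\<close> is asleep in round \<open>u\<close>
  when \<open>r u i = 0\<close>.\<close>
lemma sleeping_experts_potential_le:
  fixes r :: "nat \<Rightarrow> 'e \<Rightarrow> real" and K :: "'e set"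
  defines "R i s \<equiv> \<Sum>u<s. r u i" and "C i s \<equiv> \<Sum>u<s. \<bar>r u i\<bar>"
  assumes K: "finite K"
    and bounded: "\<forall>u<n. \<forall>i\<in>K. \<bar>r u i\<bar> \<le> 1"
    and hedge: "\<forall>u<n. (\<Sum>i\<in>K. anh_w (R i u) (C i u) * r u i) \<le> 0"
  shows "(\<Sum>i\<in>K. Phi (R i n) (C i n)) \<le> (\<Sum>i\<in>K. 5 + 4 * ln (1 + C i n))"
proof -
  have C_nonneg: "0 \<le> C i s" and R_le_C: "\<bar>R i s\<bar> \<le> C i s" for i s
    by (simp_all add: R_def C_def sum_nonneg)
  have telescoped: "(\<Sum>i\<in>K. Phi (R i m) (C i m))
      \<le> (\<Sum>i\<in>K. 1 + 4 * (\<Sum>u<m. \<bar>r u i\<bar> / (1 + C i u)))" if "m \<le> n" for m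
    using that
  proof (induction m)
    case 0
    then show ?case
      by (simp add: R_def C_def Phi_def)
  next
    case (Suc m)
    have "(\<Sum>i\<in>K. Phi (R i (Suc m)) (C i (Suc m)))
        \<le> (\<Sum>i\<in>K. Phi (R i m) (C i m) + anh_w (R i m) (C i m) * r m i
              + 4 * \<bar>r m i\<bar> / (C i m + 1))"
      using Suc.prems bounded
      by (intro sum_mono) (simp add: R_def C_def Phi_step_le[OF C_nonneg R_le_C, unfolded R_def C_def])
    also have "\<dots> \<le> (\<Sum>i\<in>K. Phi (R i m) (C i m) + 4 * \<bar>r m i\<bar> / (1 + C i m))"
      using hedge Suc.prems by (simp add: sum.distrib add.commute)
    also have "\<dots> \<le> (\<Sum>i\<in>K. 1 + 4 * (\<Sum>u<Suc m. \<bar>r u i\<bar> / (1 + C i u)))"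
      using Suc by (simp add: sum.distrib algebra_simps)
    finally show ?case .
  qed
  have "(\<Sum>i\<in>K. Phi (R i n) (C i n))
      \<le> (\<Sum>i\<in>K. 1 + 4 * (\<Sum>u<n. \<bar>r u i\<bar> / (1 + C i u)))"
    by (rule telescoped) simp
  also have "\<dots> \<le> (\<Sum>i\<in>K. 5 + 4 * ln (1 + C i n))"
  proof (rule sum_mono)
    fix i
    assume "i \<in> K"
    then have "(\<Sum>u<n. \<bar>r u i\<bar> / (1 + C i u)) \<le> 1 + ln (1 + C i n)"
      using bounded sum_div_one_plus_partial_sum_le[of n "\<lambda>u. \<bar>r u i\<bar>"] by (simp add: C_def)
    then show "1 + 4 * (\<Sum>u<n. \<bar>r u i\<bar> / (1 + C i u)) \<le> 5 + 4 * ln (1 + C i n)"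
      by simp
  qed
  finally show ?thesis .
qed

lemma le_sqrt_of_Phi_le:
  assumes "\<bar>R\<bar> \<le> C" "C \<le> n" "Phi R C \<le> M" "ln M \<le> c"
  shows "R \<le> sqrt (3 * n * c)"
proof -
  have Phi: "1 \<le> Phi R C"
    using Phi_ge_one assms(1) by simp
  then have c: "0 \<le> c"
    using assms(3,4) ln_ge_zero[of M] by linarith
  show ?thesis
  proof (cases "R \<le> 0")
    case True
    moreover have "0 \<le> sqrt (3 * n * c)"
      using c assms(1,2) by simp
    ultimately show ?thesis
      by linarith
  next
    case False
    then have "0 < C"
      using assms(1) by linarith
    have "R\<^sup>2 / (3 * C) = ln (Phi R C)"
      using False by (simp add: Phi_def)
    also have "\<dots> \<le> ln M"
      using assms(3) Phi by simp
    also have "\<dots> \<le> c"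
      by (fact assms(4))
    finally have "R\<^sup>2 \<le> 3 * C * c"
      using \<open>0 < C\<close> by (simp add: divide_le_eq mult_ac)
    also have "\<dots> \<le> 3 * n * c"
      using assms(2) c by (intro mult_right_mono) auto
    finally show ?thesis
      by (rule real_le_rsqrt)
  qed
qed

lemma ln_card_potential_le:
  fixes t T :: nat and k :: real
  assumes "1 \<le> t" "1 \<le> T" "1 \<le> k" "k \<le> real t * (1 + log 2 (real T))"
  shows "ln (k * (5 + 4 * ln (1 + real t)))
     \<le> 1 + ln (real t) + ln (1 + log 2 (real T)) + ln ((5 + 3 * ln (1 + real t)) / 2)"
proof -
  define L where "L = ln (1 + real t)"
  have L: "0 \<le> L"
    by (simp add: L_def)
  have "0 \<le> log 2 (real T)"
    using assms(2) by simp
  then have pos: "0 < real t" "0 < 1 + log 2 (real T)" "0 < 5 + 4 * L"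
    using assms(1) L by simp_all
  have "8 / 3 \<le> exp (1::real)"
    using e_approx_32 by (simp add: abs_if split: if_split_asm)
  then have "5 + 4 * L \<le> exp 1 * ((5 + 3 * L) / 2)"
    using L mult_right_mono[of "8 / 3" "exp 1" "(5 + 3 * L) / 2"] by simp
  then have "ln (5 + 4 * L) \<le> ln (exp 1 * ((5 + 3 * L) / 2))"
    using L by simp
  also have "\<dots> = 1 + ln ((5 + 3 * L) / 2)"
    using L by (subst ln_mult) auto
  finally have "ln (5 + 4 * L) \<le> 1 + ln ((5 + 3 * L) / 2)" .
  moreover have "ln (k * (5 + 4 * L)) \<le> ln (real t * (1 + log 2 (real T)) * (5 + 4 * L))"
    using assms L by (intro ln_mono mult_right_mono) auto
  moreover have "\<dots> = ln (real t) + ln (1 + log 2 (real T)) + ln (5 + 4 * L)"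
    using pos by (simp add: ln_mult del: of_nat_0_less_iff)
  ultimately show ?thesis
    unfolding L_def by linarith
qed

lemma convex_on_weighted_regret_nonpos:
  fixes x :: "'i \<Rightarrow> 'a::real_vector"
  assumes F: "convex_on \<Omega> F" and A: "finite A" and q: "\<forall>i\<in>A. 0 \<le> q i" "0 < sum q A"
    and x: "\<forall>i\<in>A. x i \<in> \<Omega>"
  shows "(\<Sum>i\<in>A. q i * (F (\<Sum>j\<in>A. (q j / sum q A) *\<^sub>R x j) - F (x i))) \<le> 0"
proof -
  let ?x = "\<Sum>j\<in>A. (q j / sum q A) *\<^sub>R x j"
  have "F ?x \<le> (\<Sum>i\<in>A. (q i / sum q A) * F (x i))"
    using q A x by (intro convex_on_sum[OF A _ F]) (auto simp: sum_divide_distrib[symmetric])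
  then have "sum q A * F ?x \<le> (\<Sum>i\<in>A. q i * F (x i))"
    using q by (simp add: sum_divide_distrib[symmetric] pos_le_divide_eq mult.commute)
  then show ?thesis
    by (simp add: right_diff_distrib sum_subtractf sum_distrib_right)
qed

lemma proj_mem:
  assumes "closed \<Omega>" "\<Omega> \<noteq> {}"
  shows "proj \<Omega> x \<in> \<Omega>"
  unfolding proj_def
  by (rule someI2[of _ "closest_point \<Omega> x"]) (use closest_point_exists[OF assms] in auto)

lemma Min_atLeastAtMost_nat: "a \<le> b \<Longrightarrow> Min {a..b::nat} = a"
  by (rule Min_eqI) auto

lemma Max_atLeastAtMost_nat: "a \<le> b \<Longrightarrow> Max {a..b::nat} = b"
  by (rule Max_eqI) auto

lemma dense_interval_atLeastAtMost:
  assumes "I \<in> dense_intervals T"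
  shows "I = {Min I..Max I}" "1 \<le> Min I" "Min I \<le> Max I"
proof -
  obtain k i where I: "I = {(i - 1) * 2 ^ k + 1 .. i * 2 ^ k}" and "1 \<le> i"
    using assms unfolding dense_intervals_def by auto
  then have "(i - 1) * 2 ^ k + 1 \<le> i * 2 ^ k"
    by (cases i) simp_all
  with I show "I = {Min I..Max I}" "1 \<le> Min I" "Min I \<le> Max I"
    by (simp_all add: Min_atLeastAtMost_nat Max_atLeastAtMost_nat)
qed

lemma mem_dense_interval_iff:
  "I \<in> dense_intervals T \<Longrightarrow> s \<in> I \<longleftrightarrow> Min I \<le> s \<and> s \<le> Max I"
  by (subst dense_interval_atLeastAtMost(1)) auto

lemma singleton_mem_dense_intervals:
  assumes "1 \<le> s" "1 \<le> T"
  shows "{s} \<in> dense_intervals T"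
proof -
  have "{s} = {(s - 1) * 2 ^ 0 + 1 .. s * 2 ^ 0} \<and> (2::nat) ^ 0 \<le> T \<and> 1 \<le> s"
    using assms by simp
  then show ?thesis
    unfolding dense_intervals_def by blast
qed

lemma sum_lessThan_dense_interval:
  assumes "I \<in> dense_intervals T" "s \<le> Suc (Max I)"
  shows "(\<Sum>u<s. if u \<in> I then h u else 0) = (\<Sum>u\<in>{Min I..<s}. h u)"
proof -
  have "{..<s} \<inter> I = {Min I..<s}"
    using assms by (auto simp: mem_dense_interval_iff)
  then show ?thesis
    by (simp add: sum.inter_restrict[symmetric])
qed

lemma dense_intervals_started_subset:
  "{I \<in> dense_intervals T. Min I \<le> t}
    \<subseteq> (\<lambda>(k, i). {(i - 1) * 2 ^ k + 1 .. i * 2 ^ k}) ` ({..nat \<lfloor>log 2 (real T)\<rfloor>} \<times> {1..t})"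
  (is "_ \<subseteq> ?ival ` ({..?L} \<times> _)")
proof
  fix I
  assume "I \<in> {I \<in> dense_intervals T. Min I \<le> t}"
  then have "I \<in> dense_intervals T" "Min I \<le> t"
    by simp_all
  then obtain k i where I: "I = {(i - 1) * 2 ^ k + 1 .. i * 2 ^ k}" and "1 \<le> i" "2 ^ k \<le> T"
    unfolding dense_intervals_def by blast
  then have "2 ^ k \<le> real T"
    by (metis of_nat_le_iff of_nat_numeral of_nat_power)
  then have "real k \<le> log 2 (real T)"
    by (rule le_log_of_power) simp
  then have "k \<le> ?L"
    by (simp add: le_nat_floor)
  have "Min I = (i - 1) * 2 ^ k + 1"
    using I \<open>1 \<le> i\<close> by (cases i) (simp_all add: Min_atLeastAtMost_nat)
  moreover have "i - 1 \<le> (i - 1) * 2 ^ k"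
    by simp
  ultimately have "i \<le> t"
    using \<open>1 \<le> i\<close> \<open>Min I \<le> t\<close> by linarith
  with I \<open>1 \<le> i\<close> \<open>k \<le> ?L\<close> show "I \<in> ?ival ` ({..?L} \<times> {1..t})"
    by auto
qed

lemma finite_dense_intervals_started: "finite {I \<in> dense_intervals T. Min I \<le> t}"
  using dense_intervals_started_subset by (rule finite_subset) simp

lemma card_dense_intervals_started_le:
  assumes "1 \<le> T"
  shows "real (card {I \<in> dense_intervals T. Min I \<le> t}) \<le> real t * (1 + log 2 (real T))"
proof -
  let ?L = "nat \<lfloor>log 2 (real T)\<rfloor>"
  have "card {I \<in> dense_intervals T. Min I \<le> t} \<le> card ({..?L} \<times> {1..t})"
    by (rule surj_card_le[OF _ dense_intervals_started_subset]) simp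
  also have "\<dots> = Suc ?L * t"
    by (simp add: card_cartesian_product)
  finally have "real (card {I \<in> dense_intervals T. Min I \<le> t}) \<le> real (Suc ?L * t)"
    by (simp only: of_nat_le_iff)
  also have "\<dots> \<le> (1 + log 2 (real T)) * real t"
    unfolding of_nat_mult using assms by (intro mult_right_mono) simp_all
  finally show ?thesis
    by (simp add: mult.commute)
qed

lemma zero_notin_dense_interval: "I \<in> dense_intervals T \<Longrightarrow> 0 \<notin> I"
  using dense_interval_atLeastAtMost(2) by (fastforce simp: mem_dense_interval_iff)

locale aod =
  fixes \<Omega> :: "'a::euclidean_space set"
    and f :: "nat \<Rightarrow> 'a \<Rightarrow> real" and g :: "nat \<Rightarrow> 'a \<Rightarrow> 'a"
    and D G :: real and T :: nat
    and wexp :: "nat set \<Rightarrow> nat \<Rightarrow> 'a" and w :: "nat \<Rightarrow> 'a"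
  assumes domain_convex: "convex \<Omega>" and domain_closed: "closed \<Omega>" and domain_nonempty: "\<Omega> \<noteq> {}"
    and loss_convex: "\<forall>s\<in>{1..T}. convex_on \<Omega> (f s)"
    and loss_range: "\<forall>s\<in>{1..T}. \<forall>x\<in>\<Omega>. 0 \<le> f s x \<and> f s x \<le> 1"
    and expert_init: "\<forall>I\<in>dense_intervals T. Min I = 1 \<longrightarrow> wexp I 1 \<in> \<Omega>"
    and expert_restart: "\<forall>I\<in>dense_intervals T. Min I > 1 \<longrightarrow>
       (let P = {Min I - card I .. Min I - 1}; s = Min I - 1 in
        wexp I (Min I) = proj \<Omega> (wexp P s - eta D G I *\<^sub>R g s (wexp P s)))"
    and expert_step: "\<forall>I\<in>dense_intervals T. \<forall>s. s \<in> I \<and> s + 1 \<in> I \<longrightarrow>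
       wexp I (s + 1) = proj \<Omega> (wexp I s - eta D G I *\<^sub>R g s (wexp I s))"
    and play: "\<forall>s\<in>{1..T}. w s = (\<Sum>I\<in>active T s. meta_p T f w wexp s I *\<^sub>R wexp I s)"
begin

lemma expert_in_domain:
  assumes I: "I \<in> dense_intervals T" and "s \<in> I"
  shows "wexp I s \<in> \<Omega>"
proof -
  have proj: "proj \<Omega> x \<in> \<Omega>" for x
    using domain_closed domain_nonempty by (rule proj_mem)
  have "Min I \<le> s" "s \<le> Max I"
    using assms by (simp_all add: mem_dense_interval_iff)
  then show ?thesis
  proof (induction s rule: dec_induct)
    case base
    show ?case
    proof (cases "Min I = 1")
      case True
      then show ?thesis
        using expert_init I by simp
    next
      case False
      then have "Min I > 1"
        using dense_interval_atLeastAtMost(2)[OF I] by simp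
      then show ?thesis
        using expert_restart I proj by (auto simp: Let_def)
    qed
  next
    case (step n)
    then have "n \<in> I" "n + 1 \<in> I"
      using I by (simp_all add: mem_dense_interval_iff)
    then show ?case
      using expert_step I proj by simp
  qed
qed

definition weight :: "nat \<Rightarrow> nat set \<Rightarrow> real" where
  "weight s I = anh_w (regR f w wexp I s) (regC f w wexp I s)"

lemma weight_nonneg: "0 \<le> weight s I"
  by (simp add: weight_def regC_def anh_w_nonneg sum_nonneg)

lemma finite_active: "finite (active T s)"
  using finite_dense_intervals_started[of T s]
  by (rule rev_finite_subset) (auto simp: active_def mem_dense_interval_iff)

lemma expert_in_domain_active: "I \<in> active T s \<Longrightarrow> wexp I s \<in> \<Omega>"
  by (simp add: active_def expert_in_domain)

lemma weight_sum_pos: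
  assumes "s \<in> {1..T}"
  shows "0 < (\<Sum>I\<in>active T s. weight s I)"
proof (rule sum_pos2)
  show "finite (active T s)"
    by (rule finite_active)
  show "{s} \<in> active T s"
    using assms singleton_mem_dense_intervals by (simp add: active_def)
  show "0 < weight s {s}"
    using anh_w_zero_pos by (simp add: weight_def regR_def regC_def)
qed (rule weight_nonneg)

lemma play_eq_convex_combination:
  assumes "s \<in> {1..T}"
  shows "w s = (\<Sum>I\<in>active T s. (weight s I / (\<Sum>I'\<in>active T s. weight s I')) *\<^sub>R wexp I s)"
  using play assms by (simp add: meta_p_def weight_def)

lemma played_in_domain:
  assumes "s \<in> {1..T}"
  shows "w s \<in> \<Omega>"
  unfolding play_eq_convex_combination[OF assms]
  using weight_sum_pos[OF assms]
  by (intro convex_sum[OF finite_active domain_convex])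
    (simp_all add: weight_nonneg expert_in_domain_active flip: sum_divide_distrib)

lemma active_weighted_regret_nonpos:
  assumes "s \<in> {1..T}"
  shows "(\<Sum>I\<in>active T s. weight s I * (f s (w s) - f s (wexp I s))) \<le> 0"
proof -
  have "convex_on \<Omega> (f s)"
    using loss_convex assms by simp
  then show ?thesis
    unfolding play_eq_convex_combination[OF assms]
    using weight_sum_pos[OF assms]
    by (intro convex_on_weighted_regret_nonpos[OF _ finite_active])
      (auto simp: weight_nonneg expert_in_domain_active)
qed

text \<open>Expert \<open>I\<close> is awake exactly in the rounds of \<open>I\<close>; outside them its regret
  is \<open>0\<close>, so that sums over all rounds \<open>u < s\<close> reproduce \<open>regR\<close> and \<open>regC\<close>.\<close>
definition instant_regret :: "nat \<Rightarrow> nat set \<Rightarrow> real" where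
  "instant_regret u I = (if u \<in> I then f u (w u) - f u (wexp I u) else 0)"

lemma abs_instant_regret_le:
  assumes I: "I \<in> dense_intervals T" and "u \<le> T"
  shows "\<bar>instant_regret u I\<bar> \<le> 1"
proof (cases "u \<in> I")
  case True
  then have u: "u \<in> {1..T}"
    using assms dense_interval_atLeastAtMost(2)[OF I] by (auto simp: mem_dense_interval_iff)
  then have "w u \<in> \<Omega>" "wexp I u \<in> \<Omega>"
    using played_in_domain expert_in_domain[OF I True] by simp_all
  then have "0 \<le> f u (w u)" "f u (w u) \<le> 1" "0 \<le> f u (wexp I u)" "f u (wexp I u) \<le> 1"
    using loss_range u by auto
  then show ?thesis
    by (simp add: instant_regret_def True abs_le_iff)
qed (simp add: instant_regret_def)

lemma sum_abs_instant_regret_le: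
  assumes "I \<in> dense_intervals T" "t \<le> T"
  shows "(\<Sum>u<Suc t. \<bar>instant_regret u I\<bar>) \<le> real (card ({..t} \<inter> I))"
proof -
  have "(\<Sum>u<Suc t. \<bar>instant_regret u I\<bar>)
      = (\<Sum>u\<in>{..t} \<inter> I. \<bar>instant_regret u I\<bar>)"
    by (simp add: sum.inter_restrict lessThan_Suc_atMost instant_regret_def if_distrib[of abs])
  also have "\<dots> \<le> real (card ({..t} \<inter> I)) * 1"
    using assms by (intro sum_bounded_above abs_instant_regret_le) auto
  finally show ?thesis
    by simp
qed

lemma sum_instant_regret:
  assumes "I \<in> dense_intervals T" "s \<le> Suc (Max I)"
  shows "(\<Sum>u<s. instant_regret u I) = (\<Sum>u\<in>{Min I..<s}. f u (w u) - f u (wexp I u))"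
    and "(\<Sum>u<s. \<bar>instant_regret u I\<bar>)
      = (\<Sum>u\<in>{Min I..<s}. \<bar>f u (w u) - f u (wexp I u)\<bar>)"
  using sum_lessThan_dense_interval[OF assms, of "\<lambda>u. f u (w u) - f u (wexp I u)"]
    sum_lessThan_dense_interval[OF assms, of "\<lambda>u. \<bar>f u (w u) - f u (wexp I u)\<bar>"]
  by (simp_all add: instant_regret_def if_distrib[of abs])

lemma weighted_instant_regret_nonpos:
  assumes "u \<le> t" "t \<le> T"
  shows "(\<Sum>I\<in>{I \<in> dense_intervals T. Min I \<le> t}.
      anh_w (\<Sum>v<u. instant_regret v I) (\<Sum>v<u. \<bar>instant_regret v I\<bar>) * instant_regret u I) \<le> 0"
proof -
  let ?K = "{I \<in> dense_intervals T. Min I \<le> t}"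
  have "(\<Sum>I\<in>?K. anh_w (\<Sum>v<u. instant_regret v I) (\<Sum>v<u. \<bar>instant_regret v I\<bar>)
        * instant_regret u I)
      = (\<Sum>I\<in>?K. if I \<in> active T u then weight u I * (f u (w u) - f u (wexp I u)) else 0)"
    using sum_instant_regret
    by (intro sum.cong) (auto simp: active_def weight_def regR_def regC_def instant_regret_def
        mem_dense_interval_iff)
  also have "\<dots> = (\<Sum>I\<in>?K \<inter> active T u. weight u I * (f u (w u) - f u (wexp I u)))"
    by (rule sum.inter_restrict[symmetric]) (rule finite_dense_intervals_started)
  also have "\<dots> = (\<Sum>I\<in>active T u. weight u I * (f u (w u) - f u (wexp I u)))"
    using assms by (intro sum.cong) (auto simp: active_def mem_dense_interval_iff)
  also have "\<dots> \<le> 0"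
  proof (cases "u = 0")
    case True
    then have "active T u = {}"
      using zero_notin_dense_interval by (auto simp: active_def)
    then show ?thesis
      by simp
  next
    case False
    then have "u \<in> {1..T}"
      using assms by simp
    then show ?thesis
      by (rule active_weighted_regret_nonpos)
  qed
  finally show ?thesis .
qed

lemma Phi_regret_le:
  assumes J: "J \<in> dense_intervals T" and "t \<in> J" "t \<le> T"
  shows "Phi (\<Sum>u<Suc t. instant_regret u J) (\<Sum>u<Suc t. \<bar>instant_regret u J\<bar>)
    \<le> card {I \<in> dense_intervals T. Min I \<le> t} * (5 + 4 * ln (1 + real t))"
proof -
  define K where "K = {I \<in> dense_intervals T. Min I \<le> t}"
  have K: "finite K"
    by (simp add: K_def finite_dense_intervals_started)
  have "J \<in> K"
    using assms by (simp add: K_def mem_dense_interval_iff)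
  then have "Phi (\<Sum>u<Suc t. instant_regret u J) (\<Sum>u<Suc t. \<bar>instant_regret u J\<bar>)
      \<le> (\<Sum>I\<in>K. Phi (\<Sum>u<Suc t. instant_regret u I) (\<Sum>u<Suc t. \<bar>instant_regret u I\<bar>))"
    using K Phi_ge_one by (intro member_le_sum) (auto intro: order_trans[OF zero_le_one] sum_nonneg)
  also have "\<dots> \<le> (\<Sum>I\<in>K. 5 + 4 * ln (1 + (\<Sum>u<Suc t. \<bar>instant_regret u I\<bar>)))"
    using K assms by (intro sleeping_experts_potential_le)
      (auto simp: K_def less_Suc_eq_le intro: abs_instant_regret_le weighted_instant_regret_nonpos)
  also have "\<dots> \<le> (\<Sum>I\<in>K. 5 + 4 * ln (1 + real t))"
  proof (rule sum_mono)
    fix I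
    assume "I \<in> K"
    then have I: "I \<in> dense_intervals T"
      by (simp add: K_def)
    have "card ({..t} \<inter> I) \<le> card {1..t}"
      using zero_notin_dense_interval[OF I] by (intro card_mono) (auto simp: Suc_le_eq intro!: gr0I)
    then have "(\<Sum>u<Suc t. \<bar>instant_regret u I\<bar>) \<le> real t"
      using sum_abs_instant_regret_le[OF I \<open>t \<le> T\<close>] by simp
    then show "5 + 4 * ln (1 + (\<Sum>u<Suc t. \<bar>instant_regret u I\<bar>)) \<le> 5 + 4 * ln (1 + real t)"
      by (simp add: add_pos_nonneg sum_nonneg)
  qed
  finally show ?thesis
    by (simp add: K_def)
qed

end

theorem lemma1:
  fixes \<Omega> :: "'a::euclidean_space set"
    and f :: "nat \<Rightarrow> 'a \<Rightarrow> real" and g :: "nat \<Rightarrow> 'a \<Rightarrow> 'a"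
    and D G :: real and T :: nat
    and wexp :: "nat set \<Rightarrow> nat \<Rightarrow> 'a" and w :: "nat \<Rightarrow> 'a"
    and J :: "nat set" and t :: nat
  assumes cvx: "convex \<Omega>" and cl: "closed \<Omega>" and ne: "\<Omega> \<noteq> {}"
    and DG: "D > 0" "G > 0"
    and fconv: "\<forall>s\<in>{1..T}. convex_on \<Omega> (f s)"
    and grad: "\<forall>s\<in>{1..T}. \<forall>x\<in>\<Omega>. (f s has_derivative (\<lambda>h. g s x \<bullet> h)) (at x within \<Omega>)"
    and A3: "\<forall>s\<in>{1..T}. \<forall>x\<in>\<Omega>. 0 \<le> f s x \<and> f s x \<le> 1"
    and init1: "\<forall>I\<in>dense_intervals T. Min I = 1 \<longrightarrow> wexp I 1 \<in> \<Omega>"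
    and init: "\<forall>I\<in>dense_intervals T. Min I > 1 \<longrightarrow>
       (let P = {Min I - card I .. Min I - 1}; s = Min I - 1 in
        wexp I (Min I) = proj \<Omega> (wexp P s - eta D G I *\<^sub>R g s (wexp P s)))"
    and step: "\<forall>I\<in>dense_intervals T. \<forall>s. s \<in> I \<and> s + 1 \<in> I \<longrightarrow>
       wexp I (s + 1) = proj \<Omega> (wexp I s - eta D G I *\<^sub>R g s (wexp I s))"
    and play: "\<forall>s\<in>{1..T}. w s = (\<Sum>I\<in>active T s. meta_p T f w wexp s I *\<^sub>R wexp I s)"
    and J: "J \<in> dense_intervals T" and tJ: "t \<in> J" and tT: "t \<le> T"
  shows "(\<Sum>u=Min J..t. f u (w u)) - (\<Sum>u=Min J..t. f u (wexp J u))
         \<le> sqrt (3 * real (t - Min J + 1) *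
              (1 + ln (real t) + ln (1 + log 2 (real T)) + ln ((5 + 3 * ln (1 + real t)) / 2)))"
proof -
  interpret aod \<Omega> f g D G T wexp w
    by (rule aod.intro) (fact cvx cl ne fconv A3 init1 init step play)+
  have t: "Min J \<le> t" "t \<le> Max J"
    using J tJ by (simp_all add: mem_dense_interval_iff)
  then have "1 \<le> t" "1 \<le> T"
    using dense_interval_atLeastAtMost(2)[OF J] tT by simp_all
  have regret: "(\<Sum>u<Suc t. instant_regret u J)
      = (\<Sum>u=Min J..t. f u (w u)) - (\<Sum>u=Min J..t. f u (wexp J u))"
    using sum_instant_regret(1)[OF J, of "Suc t"] t
    by (simp add: atLeastLessThanSuc_atLeastAtMost sum_subtractf)
  have "{..t} \<inter> J = {Min J..t}"
    using t J by (auto simp: mem_dense_interval_iff)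
  then have length: "(\<Sum>u<Suc t. \<bar>instant_regret u J\<bar>) \<le> real (t - Min J + 1)"
    using sum_abs_instant_regret_le[OF J tT] t by simp
  have "1 \<le> card {I \<in> dense_intervals T. Min I \<le> t}"
    using J t finite_dense_intervals_started by (auto simp: Suc_le_eq card_gt_0_iff)
  then have "ln (card {I \<in> dense_intervals T. Min I \<le> t} * (5 + 4 * ln (1 + real t)))
      \<le> 1 + ln (real t) + ln (1 + log 2 (real T)) + ln ((5 + 3 * ln (1 + real t)) / 2)"
    using \<open>1 \<le> t\<close> \<open>1 \<le> T\<close> card_dense_intervals_started_le
    by (intro ln_card_potential_le) auto
  with Phi_regret_le[OF J tJ tT] length show ?thesis
    unfolding regret[symmetric] by (intro le_sqrt_of_Phi_le[OF sum_abs])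
qed

end
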